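(* Let $M\in\mathbb Z_{\geq0}$ and $v_0,\dots,v_M\in\mathcal V$ with $v_0<v_1<\dots<v_M$ and $v_{i+1}\in\pi(\Psi(v_i))$ for all $i\in\{0,\dots,M-1\}$. Then $M\leq (n+1)\frac{v_M+\mu_\kappa}{\tau}+h(v_M)$.
   Context: Let $\mathbf K$ be a field and $\ell\geq 2$ an integer. Let $L=a_n\phi_\ell^n+\dots+a_0$ with $n\geq1$, $a_i\in\mathbf K[z]$, $a_0a_n\neq0$, where $\phi_\ell(f)(z)=f(z^\ell)$ acting on Hahn series with coefficients in $\mathbf K$ and value group $\mathbb Q$. Let $\mathcal P(L)=\{(\ell^i,j): 0\le i\le n,\ j\in\operatorname{supp} a_i\}$. The Newton polygon of $L$ is the convex hull of $\{(\ell^i,j): 0\le i\le n,\ j\geq\operatorname{val} a_i\}\subset\mathbb R^2$; its non-vertical edges have slopes $\mu_1<\dots<\mu_\kappa$, $\mathcal S(L)=\{\mu_1,\dots,\mu_\kappa\}$. Let $d\geq1$ be a common multiple of the denominators of the $\mu_k$; $\mathbb Z_{d,\ell}=\bigcup_{i\geq0}\frac{1}{d\ell^i}\mathbb Z$, and $h(v)=\min\{i\geq0: v\in\frac1{d\ell^i}\mathbb Z\}$ for $v\in\mathbb Z_{d,\ell}$. Define $\Psi(v)=\{v\ell^i+j:(\ell^i,j)\in\mathcal P(L)\}$, $\pi(q)=\max\{(q-j)/\ell^i:(\ell^i,j)\in\mathcal P(L)\}$. Let $\mathcal V_0=-\mathcal S(L)$, $\mathcal V_{i+1}=\bigcup_{v\in\mathcal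 V_i}\pi(\Psi(v))$, $\mathcal V=\bigcup_{i\ge0}\mathcal V_i$ (a well-ordered subset of $\mathbb Z_{d,\ell}$). For $v\in\mathbb Q$ let $\epsilon(v)=\min\{w\in\mathcal V: w>v\}-v\in\mathbb Q_{>0}\cup\{+\infty\}$ ($+\infty$ if this set is empty), and $\tau=\min\{\epsilon(-\mu_1),\dots,\epsilon(-\mu_\kappa),(d\ell^n)^{-1}\}\in\mathbb Q_{>0}$. *)

theory Defs
  imports "HOL-Analysis.Analysis" "HOL-Computational_Algebra.Polynomial"
begin

text \<open>The operator L = a_n phi_l^n + ... + a_0 is represented by the coefficient
  family a :: nat => 'a poly (only a 0, ..., a n matter), together with l and n.\<close>

definition psupp :: "'a::zero poly \<Rightarrow> nat set" where
  "psupp p = {j. coeff p j \<noteq> 0}"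

definition pval :: "'a::zero poly \<Rightarrow> nat" where
  "pval p = (LEAST j. coeff p j \<noteq> 0)"

definition ptsL :: "nat \<Rightarrow> nat \<Rightarrow> (nat \<Rightarrow> 'a::zero poly) \<Rightarrow> (real \<times> real) set" where
  "ptsL l n a = {(real l ^ i, real j) | i j. i \<le> n \<and> j \<in> psupp (a i)}"

text \<open>Newton polygon: convex hull of {(l^i, j) : 0 <= i <= n, j >= val a_i} in R^2
  (val 0 = +infinity, so a_i = 0 contributes no points).\<close>
definition newton_polygon :: "nat \<Rightarrow> nat \<Rightarrow> (nat \<Rightarrow> 'a::zero poly) \<Rightarrow> (real \<times> real) set" where
  "newton_polygon l n a =
     convex hull {(real l ^ i, y) | i y. i \<le> n \<and> a i \<noteq> 0 \<and> real (pval (a i)) \<le> y}"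

definition slopesL :: "nat \<Rightarrow> nat \<Rightarrow> (nat \<Rightarrow> 'a::zero poly) \<Rightarrow> real set" where
  "slopesL l n a = {\<mu>. \<exists>F. F face_of newton_polygon l n a \<and> aff_dim F = 1 \<and>
      (\<exists>p\<in>F. \<exists>q\<in>F. fst p < fst q \<and> \<mu> = (snd q - snd p) / (fst q - fst p))}"

definition PsiL :: "nat \<Rightarrow> nat \<Rightarrow> (nat \<Rightarrow> 'a::zero poly) \<Rightarrow> real \<Rightarrow> real set" where
  "PsiL l n a v = {v * x + j | x j. (x, j) \<in> ptsL l n a}"

definition piL :: "nat \<Rightarrow> nat \<Rightarrow> (nat \<Rightarrow> 'a::zero poly) \<Rightarrow> real \<Rightarrow> real" where
  "piL l n a q = Max {(q - j) / x | x j. (x, j) \<in> ptsL l n a}"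

fun VL :: "nat \<Rightarrow> nat \<Rightarrow> (nat \<Rightarrow> 'a::zero poly) \<Rightarrow> nat \<Rightarrow> real set" where
  "VL l n a 0 = uminus ` slopesL l n a"
| "VL l n a (Suc k) = (\<Union>v\<in>VL l n a k. piL l n a ` PsiL l n a v)"

definition VsetL :: "nat \<Rightarrow> nat \<Rightarrow> (nat \<Rightarrow> 'a::zero poly) \<Rightarrow> real set" where
  "VsetL l n a = (\<Union>k. VL l n a k)"

definition hL :: "nat \<Rightarrow> nat \<Rightarrow> real \<Rightarrow> nat" where
  "hL d l v = (LEAST i. v * real d * real l ^ i \<in> \<int>)"

text \<open>epsilon(v) = min {w in V : w > v} - v, with None standing for +infinity.\<close>
definition epsL :: "nat \<Rightarrow> nat \<Rightarrow> (nat \<Rightarrow> 'a::zero poly) \<Rightarrow> real \<Rightarrow> real option" where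
  "epsL l n a v = (if \<exists>w\<in>VsetL l n a. w > v
      then Some ((LEAST w. w \<in> VsetL l n a \<and> w > v) - v) else None)"

text \<open>tau = min(epsilon(-mu_1), ..., epsilon(-mu_kappa), 1/(d l^n)); infinite values are ignored.\<close>
definition tauL :: "nat \<Rightarrow> nat \<Rightarrow> nat \<Rightarrow> (nat \<Rightarrow> 'a::zero poly) \<Rightarrow> real" where
  "tauL d l n a = Min ({1 / (real d * real l ^ n)} \<union>
      {e. \<exists>\<mu>\<in>slopesL l n a. epsL l n a (- \<mu>) = Some e})"

end

theory Submission
  imports Defs
begin

text \<open>Along each step \<open>v \<mapsto> w\<close> the potential \<open>\<Phi>(u) = (n + 1) u / \<tau> + h(u)\<close> grows by at
  least \<open>1\<close>. Writing \<open>w l\<^sup>c = v l\<^sup>i + z\<close> with \<open>z\<close> an integer, \<open>h\<close> drops by at most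
  \<open>i \<le> n\<close>, which settles steps of length at least \<open>\<tau>\<close>. A shorter step can neither reach past
  a slope \<open>-\<beta>\<close> of the Newton polygon (the gap \<open>\<epsilon>(\<beta>)\<close> after it is at least \<open>\<tau>\<close>) nor have
  length a multiple of \<open>1 / (d l\<^sup>n)\<close>; comparing \<open>i\<close> with the index \<open>c\<close> of the rightmost
  point of \<open>P(L)\<close> active at \<open>w\<close> then forces \<open>h(w) > h(v)\<close>. Telescoping and
  \<open>v\<^sub>0 \<ge> -\<mu>\<^sub>\<kappa>\<close> give the bound.

  That \<open>\<epsilon>\<close> is well defined relies on \<open>\<V>\<close> having no right accumulation point: the infimum
  of such points would be one, whereas each has a smaller one of the form
  \<open>(supp_fn s - j) / l\<^sup>i\<close>.\<close>

lemma finite_psupp: "finite (psupp p)"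
proof -
  have "psupp p \<subseteq> {..degree p}" by (auto simp: psupp_def le_degree)
  then show ?thesis using finite_subset by blast
qed

lemma pval_in_psupp: "p \<noteq> 0 \<Longrightarrow> pval p \<in> psupp p"
  unfolding pval_def psupp_def using LeastI[of "\<lambda>j. coeff p j \<noteq> 0" "degree p"] by simp

lemma pval_le: "j \<in> psupp p \<Longrightarrow> pval p \<le> j"
  unfolding pval_def psupp_def by (simp add: Least_le)

lemma collinear_affine_eq:
  fixes F :: "(real \<times> real) set"
  assumes "collinear F" "p \<in> F" "q \<in> F" "fst p \<noteq> fst q"
    and "snd p - \<mu> * fst p = snd q - \<mu> * fst q" and "w \<in> F"
  shows "snd w - \<mu> * fst w = snd q - \<mu> * fst q"
proof -
  obtain u where u: "\<And>x y. x \<in> F \<Longrightarrow> y \<in> F \<Longrightarrow> \<exists>k. x - y = k *\<^sub>R u"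
    using assms(1) unfolding collinear_def by metis
  obtain k1 where k1: "p - q = k1 *\<^sub>R u" using u[OF assms(2,3)] by blast
  obtain k2 where k2: "w - q = k2 *\<^sub>R u" using u[OF assms(6,3)] by blast
  have f1: "fst p - fst q = k1 * fst u" "snd p - snd q = k1 * snd u"
    using arg_cong[OF k1, of fst] arg_cong[OF k1, of snd] by auto
  have f2: "fst w - fst q = k2 * fst u" "snd w - snd q = k2 * snd u"
    using arg_cong[OF k2, of fst] arg_cong[OF k2, of snd] by auto
  have "k1 \<noteq> 0" using f1 assms(4) by auto
  moreover have "k1 * (snd u - \<mu> * fst u) = 0" using f1 assms(5) by (simp add: algebra_simps)
  ultimately have "snd u - \<mu> * fst u = 0" by simp
  then show ?thesis using f2 by (simp add: algebra_simps)
qed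

lemma convex_fst_eq: "convex {z :: real \<times> real. fst z = X}"
proof -
  have "{z :: real \<times> real. fst z = X} = {z. inner (1, 0) z = X}" by (simp add: inner_prod_def)
  then show ?thesis by (simp add: convex_hyperplane)
qed

lemma convex_affine_halfplane: "convex {z :: real \<times> real. b \<le> \<alpha> * fst z + \<gamma> * snd z}"
proof -
  have "{z :: real \<times> real. b \<le> \<alpha> * fst z + \<gamma> * snd z} = {z. inner (\<alpha>, \<gamma>) z \<ge> b}"
    by (auto simp: inner_prod_def)
  then show ?thesis using convex_halfspace_ge by metis
qed

section \<open>The exponent \<open>h\<close>\<close>

lemma hL_LeastI: "v * real d * real l ^ k \<in> \<int> \<Longrightarrow> v * real d * real l ^ hL d l v \<in> \<int>"
  unfolding hL_def by (rule LeastI)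

lemma not_Ints_below_hL: "k < hL d l v \<Longrightarrow> v * real d * real l ^ k \<notin> \<int>"
  unfolding hL_def by (rule not_less_Least)

lemma Ints_above_hL:
  assumes "v * real d * real l ^ k \<in> \<int>" "hL d l v \<le> m"
  shows "v * real d * real l ^ m \<in> \<int>"
proof -
  have "v * real d * real l ^ hL d l v * real l ^ (m - hL d l v) \<in> \<int>"
    using hL_LeastI[OF assms(1)] by (simp add: Ints_mult)
  moreover have "real l ^ hL d l v * real l ^ (m - hL d l v) = real l ^ m"
    using assms(2) by (simp flip: power_add)
  ultimately show ?thesis by (simp add: mult.assoc)
qed

lemma hL_quotient_ge:
  assumes Zv: "v * real d * real l ^ K \<in> \<int>" and eq: "w * real l ^ c = v * real l ^ i + z"
    and zI: "z \<in> \<int>" and H: "i < hL d l v"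
  shows "hL d l v + c \<le> hL d l w + i"
proof (rule ccontr)
  assume less: "\<not> ?thesis"
  define m where "m = hL d l v - 1 - i"
  have Zw: "w * real d * real l ^ (K + c) \<in> \<int>"
  proof -
    have "w * real d * real l ^ (K + c)
        = (v * real d * real l ^ K) * real l ^ i + z * real d * real l ^ K"
      using arg_cong[OF eq, of "\<lambda>t. t * real d * real l ^ K"]
      by (simp add: power_add algebra_simps)
    then show ?thesis using Zv zI by (simp add: Ints_mult Ints_add)
  qed
  have "w * real d * real l ^ (m + c) \<in> \<int>"
    using Ints_above_hL[OF Zw] less H unfolding m_def by simp
  moreover have "w * real d * real l ^ (m + c)
      = v * real d * real l ^ (hL d l v - 1) + z * real d * real l ^ m"
  proof -
    have "w * real d * real l ^ (m + c) = (w * real l ^ c) * real d * real l ^ m"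
      by (simp add: power_add algebra_simps)
    also have "\<dots> = v * real d * real l ^ (i + m) + z * real d * real l ^ m"
      unfolding eq by (simp add: power_add algebra_simps)
    also have "i + m = hL d l v - 1" unfolding m_def using H by simp
    finally show ?thesis .
  qed
  ultimately have "v * real d * real l ^ (hL d l v - 1) \<in> \<int>"
    using zI by (metis Ints_diff Ints_mult Ints_of_nat add_diff_cancel_right' of_nat_power)
  moreover have "hL d l v - 1 < hL d l v" using H by simp
  ultimately show False using not_Ints_below_hL by blast
qed

lemma hL_less_of_shift:
  assumes Zv: "v * real d * real l ^ K \<in> \<int>" and eq: "w * real l ^ c = v * real l ^ i + z"
    and zI: "z \<in> \<int>" and "i < c" and not_Ints: "real d * real l ^ c * (w - v) \<notin> \<int>"
  shows "hL d l v < hL d l w"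
proof (cases "i < hL d l v")
  case True
  then show ?thesis using hL_quotient_ge[OF Zv eq zI True] \<open>i < c\<close> by simp
next
  case False
  then have vi: "v * real d * real l ^ i \<in> \<int>" using Ints_above_hL[OF Zv] by simp
  have pc: "real l ^ c = real l ^ i * real l ^ (c - i)" using \<open>i < c\<close> by (simp flip: power_add)
  have "real d * real l ^ c * (w - v)
      = real d * (w * real l ^ c) - (v * real d * real l ^ i) * real l ^ (c - i)"
    unfolding pc by (simp add: algebra_simps)
  also have "\<dots> = v * real d * real l ^ i + real d * z - (v * real d * real l ^ i) * real l ^ (c - i)"
    unfolding eq by (simp add: algebra_simps)
  also have "\<dots> \<in> \<int>" using vi zI by (simp add: Ints_add Ints_diff Ints_mult)
  finally show ?thesis using not_Ints by blast
qed

section \<open>Right accumulation points of sets of reals\<close>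

definition right_accumulates :: "real set \<Rightarrow> real \<Rightarrow> bool" where
  "right_accumulates S s \<longleftrightarrow> (\<forall>\<delta>>0. \<exists>w\<in>S. s < w \<and> w < s + \<delta>)"

text \<open>The infimum of the right accumulation points is itself one, so it has no smaller one.\<close>
lemma no_right_accumulation:
  assumes bound: "\<And>s. right_accumulates S s \<Longrightarrow> b \<le> s"
    and descent: "\<And>s. right_accumulates S s \<Longrightarrow> \<exists>y<s. right_accumulates S y"
  shows "\<not> right_accumulates S s"
proof
  assume rs: "right_accumulates S s"
  define D where "D = {s. right_accumulates S s}"
  have bdd: "bdd_below D" unfolding D_def using bound by (rule bdd_belowI) simp
  have Dne: "D \<noteq> {}" using rs D_def by auto
  define \<sigma> where "\<sigma> = Inf D"
  have low: "\<sigma> \<le> t" if "right_accumulates S t" for t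
    unfolding \<sigma>_def using bdd that by (intro cInf_lower) (simp add: D_def)
  have "right_accumulates S \<sigma>" unfolding right_accumulates_def
  proof (intro allI impI)
    fix \<delta> :: real assume "\<delta> > 0"
    then have "Inf D < \<sigma> + \<delta>/2" unfolding \<sigma>_def by simp
    then have "\<exists>t\<in>D. t < \<sigma> + \<delta>/2" using Dne bdd by (simp add: cInf_less_iff)
    then obtain t where t: "right_accumulates S t" "t < \<sigma> + \<delta>/2" unfolding D_def by auto
    obtain w where w: "w \<in> S" "t < w" "w < t + \<delta>/2"
      using t(1) \<open>\<delta> > 0\<close> unfolding right_accumulates_def by (meson half_gt_zero)
    then show "\<exists>w\<in>S. \<sigma> < w \<and> w < \<sigma> + \<delta>" using low[OF t(1)] t(2) by force
  qed
  then show False using descent low by (meson not_le)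
qed

lemma least_above_if_no_right_accumulation:
  assumes "\<And>s. \<not> right_accumulates S s" and "\<exists>w\<in>S. \<beta> < w"
  shows "\<exists>m\<in>S. \<beta> < m \<and> (\<forall>w\<in>S. \<beta> < w \<longrightarrow> m \<le> w)"
proof -
  define A where "A = {w\<in>S. \<beta> < w}"
  have Ane: "A \<noteq> {}" using assms(2) A_def by auto
  have bdd: "bdd_below A" unfolding A_def by (auto intro: bdd_belowI[of _ \<beta>])
  define \<sigma> where "\<sigma> = Inf A"
  have low: "\<sigma> \<le> w" if "w \<in> A" for w unfolding \<sigma>_def using that bdd by (rule cInf_lower)
  have "\<sigma> \<in> A"
  proof (rule ccontr)
    assume "\<sigma> \<notin> A"
    have "right_accumulates S \<sigma>" unfolding right_accumulates_def
    proof (intro allI impI)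
      fix \<delta> :: real assume "\<delta> > 0"
      then have "Inf A < \<sigma> + \<delta>" unfolding \<sigma>_def by simp
      then have "\<exists>t\<in>A. t < \<sigma> + \<delta>" using Ane bdd by (simp add: cInf_less_iff)
      then obtain t where t: "t \<in> A" "t < \<sigma> + \<delta>" by auto
      then have "\<sigma> < t" using low[OF t(1)] \<open>\<sigma> \<notin> A\<close> by (metis order_le_imp_less_or_eq)
      then show "\<exists>w\<in>S. \<sigma> < w \<and> w < \<sigma> + \<delta>" using t unfolding A_def by blast
    qed
    then show False using assms(1) by blast
  qed
  then show ?thesis using low unfolding A_def by auto
qed

section \<open>The support function of the point set of an operator\<close>

locale newton_operator =
  fixes l n :: nat and a :: "nat \<Rightarrow> 'a::zero poly"
  assumes l_ge_2: "l \<ge> 2" and a0_nonzero: "a 0 \<noteq> 0"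
begin

abbreviation "P \<equiv> ptsL l n a"

lemma mem_PE:
  assumes "(x, y) \<in> P" obtains i j where "i \<le> n" "x = real l ^ i" "y = real j"
  using assms by (auto simp: ptsL_def)

lemma finite_P: "finite P"
proof -
  have "P = (\<lambda>(i, j). (real l ^ i, real j)) ` (SIGMA i:{..n}. psupp (a i))"
    by (auto simp: ptsL_def)
  then show ?thesis by (auto intro!: finite_SigmaI finite_psupp)
qed

lemma P_nonempty: "P \<noteq> {}"
  using pval_in_psupp[OF a0_nonzero] by (auto simp: ptsL_def)

lemma P_bounds:
  assumes "(x, y) \<in> P" shows "1 \<le> x" "x \<le> real l ^ n" "0 \<le> y" "0 < x"
proof -
  obtain i j where "i \<le> n" "x = real l ^ i" "y = real j" using assms by (rule mem_PE)
  then show "1 \<le> x" "x \<le> real l ^ n" "0 \<le> y" "0 < x"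
    using l_ge_2 by (auto intro: power_increasing one_le_power)
qed

definition supp_fn :: "real \<Rightarrow> real" where
  "supp_fn t = Min ((\<lambda>(x, y). t * x + y) ` P)"

lemma PsiL_eq: "PsiL l n a t = (\<lambda>(x, y). t * x + y) ` P"
  by (auto simp: PsiL_def)

lemma piL_eq: "piL l n a q = Max ((\<lambda>(x, y). (q - y) / x) ` P)"
  unfolding piL_def by (rule arg_cong[where f = Max]) auto

lemma supp_fn_le: "(x, y) \<in> P \<Longrightarrow> supp_fn t \<le> t * x + y"
  unfolding supp_fn_def using finite_P by (auto intro!: Min_le)

lemma supp_fn_attained: obtains x y where "(x, y) \<in> P" "supp_fn t = t * x + y"
proof -
  have "supp_fn t \<in> (\<lambda>(x, y). t * x + y) ` P"
    unfolding supp_fn_def using finite_P P_nonempty by (intro Min_in) auto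
  then show ?thesis using that by auto
qed

lemma supp_fn_ge_iff: "q \<le> supp_fn t \<longleftrightarrow> (\<forall>(x, y)\<in>P. q \<le> t * x + y)"
  unfolding supp_fn_def using finite_P P_nonempty by (auto simp: Min_ge_iff)

lemma piL_ge: "(x, y) \<in> P \<Longrightarrow> (q - y) / x \<le> piL l n a q"
  unfolding piL_eq using finite_P by (auto intro!: Max_ge)

lemma piL_attained: obtains x y where "(x, y) \<in> P" "piL l n a q = (q - y) / x"
proof -
  have "piL l n a q \<in> (\<lambda>(x, y). (q - y) / x) ` P"
    unfolding piL_eq using finite_P P_nonempty by (intro Max_in) auto
  then show ?thesis using that by auto
qed

text \<open>\<open>\<pi>\<close> is the upper adjoint of the increasing function \<open>supp_fn\<close>.\<close>
lemma piL_le_iff: "piL l n a q \<le> s \<longleftrightarrow> q \<le> supp_fn s"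
proof -
  have "piL l n a q \<le> s \<longleftrightarrow> (\<forall>(x, y)\<in>P. (q - y) / x \<le> s)"
    unfolding piL_eq using finite_P P_nonempty by (auto simp: Max_le_iff)
  also have "\<dots> \<longleftrightarrow> (\<forall>(x, y)\<in>P. q \<le> s * x + y)"
  proof -
    have "(q - y) / x \<le> s \<longleftrightarrow> q \<le> s * x + y" if "(x, y) \<in> P" for x y
      using P_bounds[OF that] by (simp add: pos_divide_le_eq algebra_simps)
    then show ?thesis by auto
  qed
  finally show ?thesis using supp_fn_ge_iff by simp
qed

lemma supp_fn_piL: "supp_fn (piL l n a q) = q"
proof -
  obtain x y where xy: "(x, y) \<in> P" "piL l n a q = (q - y) / x" by (rule piL_attained)
  have "supp_fn (piL l n a q) \<le> ((q - y) / x) * x + y" unfolding xy(2) by (rule supp_fn_le[OF xy(1)])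
  also have "\<dots> = q" using P_bounds[OF xy(1)] by simp
  finally show ?thesis using piL_le_iff[of q "piL l n a q"] by simp
qed

lemma ge_piL: "(x, y) \<in> P \<Longrightarrow> v \<le> piL l n a (v * x + y)"
  using piL_ge[of x y "v * x + y"] P_bounds[of x y] by simp

lemma supp_fn_mono: "s \<le> t \<Longrightarrow> supp_fn s \<le> supp_fn t"
proof -
  assume "s \<le> t"
  obtain x y where xy: "(x, y) \<in> P" "supp_fn t = t * x + y" by (rule supp_fn_attained)
  have "supp_fn s \<le> s * x + y" using supp_fn_le[OF xy(1)] .
  also have "\<dots> \<le> t * x + y" using \<open>s \<le> t\<close> P_bounds[OF xy(1)] by (simp add: mult_right_mono)
  finally show ?thesis using xy by simp
qed

lemma supp_fn_Lipschitz:
  assumes "0 \<le> \<delta>" shows "supp_fn (s + \<delta>) \<le> supp_fn s + \<delta> * real l ^ n"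
proof -
  obtain x y where xy: "(x, y) \<in> P" "supp_fn s = s * x + y" by (rule supp_fn_attained)
  have "supp_fn (s + \<delta>) \<le> (s + \<delta>) * x + y" using supp_fn_le[OF xy(1)] .
  also have "\<dots> = supp_fn s + \<delta> * x" using xy by (simp add: algebra_simps)
  also have "\<dots> \<le> supp_fn s + \<delta> * real l ^ n"
    using P_bounds[OF xy(1)] assms by (simp add: mult_left_mono)
  finally show ?thesis .
qed

lemma rightmost_active_point:
  obtains xc e where "(xc, e) \<in> P" "supp_fn w = w * xc + e"
    "\<And>x y. (x, y) \<in> P \<Longrightarrow> supp_fn w = w * x + y \<Longrightarrow> x \<le> xc"
proof -
  define A where "A = {z\<in>P. supp_fn w = w * fst z + snd z}"
  have "finite A" unfolding A_def using finite_P by simp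
  moreover have "A \<noteq> {}"
  proof -
    obtain x y where "(x, y) \<in> P" "supp_fn w = w * x + y" by (rule supp_fn_attained)
    then show ?thesis unfolding A_def by force
  qed
  ultimately have "Max (fst ` A) \<in> fst ` A" by simp
  then obtain e where e: "(Max (fst ` A), e) \<in> A" by force
  have "x \<le> Max (fst ` A)" if "(x, y) \<in> P" "supp_fn w = w * x + y" for x y
    using that \<open>finite A\<close> unfolding A_def by (intro Max_ge) force+
  moreover have "(Max (fst ` A), e) \<in> P" "supp_fn w = w * Max (fst ` A) + e"
    using e unfolding A_def by auto
  ultimately show ?thesis using that by blast
qed

section \<open>The Newton polygon and its slopes\<close>

definition np_gens :: "(real \<times> real) set" where
  "np_gens = {(real l ^ i, y) | i y. i \<le> n \<and> a i \<noteq> 0 \<and> real (pval (a i)) \<le> y}"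

lemma newton_polygon_eq: "newton_polygon l n a = convex hull np_gens"
  unfolding newton_polygon_def np_gens_def by simp

lemma np_gensE:
  assumes "z \<in> np_gens" obtains y0 where "(fst z, y0) \<in> P" "y0 \<le> snd z"
proof -
  obtain i y where "z = (real l ^ i, y)" "i \<le> n" "a i \<noteq> 0" "real (pval (a i)) \<le> y"
    using assms unfolding np_gens_def by blast
  moreover have "(real l ^ i, real (pval (a i))) \<in> P"
    using pval_in_psupp[OF \<open>a i \<noteq> 0\<close>] \<open>i \<le> n\<close> by (auto simp: ptsL_def)
  ultimately show ?thesis using that by auto
qed

lemma P_subset_np_gens: "P \<subseteq> np_gens"
proof
  fix z assume "z \<in> P"
  then obtain i j where "z = (real l ^ i, real j)" "i \<le> n" "j \<in> psupp (a i)"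
    by (auto simp: ptsL_def)
  moreover have "a i \<noteq> 0" using \<open>j \<in> psupp (a i)\<close> by (auto simp: psupp_def)
  moreover have "real (pval (a i)) \<le> real j" using pval_le[OF \<open>j \<in> psupp (a i)\<close>] by simp
  ultimately show "z \<in> np_gens" unfolding np_gens_def by blast
qed

lemma P_subset_newton_polygon: "P \<subseteq> newton_polygon l n a"
  unfolding newton_polygon_eq using P_subset_np_gens hull_subset by (rule order_trans)

lemma convex_newton_polygon: "convex (newton_polygon l n a)"
  unfolding newton_polygon_eq by simp

lemma newton_polygon_halfplane:
  assumes "0 \<le> \<gamma>" "\<And>x y. (x, y) \<in> P \<Longrightarrow> b \<le> \<alpha> * x + \<gamma> * y"
    and "z \<in> newton_polygon l n a"
  shows "b \<le> \<alpha> * fst z + \<gamma> * snd z"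
proof -
  have "np_gens \<subseteq> {z. b \<le> \<alpha> * fst z + \<gamma> * snd z}"
  proof
    fix z assume "z \<in> np_gens"
    then obtain y0 where y0: "(fst z, y0) \<in> P" "y0 \<le> snd z" by (rule np_gensE)
    have "b \<le> \<alpha> * fst z + \<gamma> * y0" using assms(2)[OF y0(1)] .
    also have "\<dots> \<le> \<alpha> * fst z + \<gamma> * snd z" using y0(2) assms(1) by (simp add: mult_left_mono)
    finally show "z \<in> {z. b \<le> \<alpha> * fst z + \<gamma> * snd z}" by simp
  qed
  then have "convex hull np_gens \<subseteq> {z. b \<le> \<alpha> * fst z + \<gamma> * snd z}"
    by (intro hull_minimal convex_affine_halfplane)
  then show ?thesis using assms(3) newton_polygon_eq by auto
qed

lemma newton_polygon_upward_closed:
  assumes "z \<in> newton_polygon l n a" "0 \<le> t"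
  shows "z + (0, t) \<in> newton_polygon l n a"
proof -
  let ?U = "{z. \<forall>t\<ge>0. z + (0, t) \<in> convex hull np_gens}"
  have "np_gens \<subseteq> ?U"
  proof
    fix z assume "z \<in> np_gens"
    then have "\<forall>t\<ge>0. z + (0, t) \<in> np_gens" unfolding np_gens_def by force
    then show "z \<in> ?U" by (simp add: hull_inc)
  qed
  moreover have "convex ?U"
  proof (rule convexI)
    fix x y :: "real \<times> real" and u v :: real
    assume x: "x \<in> ?U" and y: "y \<in> ?U" and uv: "0 \<le> u" "0 \<le> v" "u + v = 1"
    show "u *\<^sub>R x + v *\<^sub>R y \<in> ?U"
    proof (simp, intro allI impI)
      fix t :: real assume t: "0 \<le> t"
      have "u *\<^sub>R (x + (0, t)) + v *\<^sub>R (y + (0, t)) \<in> convex hull np_gens"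
        using x y uv t by (intro convexD) auto
      moreover have "u *\<^sub>R (x + (0, t)) + v *\<^sub>R (y + (0, t)) = u *\<^sub>R x + v *\<^sub>R y + (0, t)"
        using uv by (auto simp: algebra_simps prod_eq_iff simp flip: distrib_left)
      ultimately show "u *\<^sub>R x + v *\<^sub>R y + (0, t) \<in> convex hull np_gens" by simp
    qed
  qed
  ultimately have "convex hull np_gens \<subseteq> ?U" by (rule hull_minimal)
  then show ?thesis using assms newton_polygon_eq by auto
qed

lemma slope_of_breakpoint:
  assumes p1: "(x1, y1) \<in> P" and p2: "(x2, y2) \<in> P" and "x1 < x2"
    and e1: "\<beta> * x1 + y1 = supp_fn \<beta>" and e2: "\<beta> * x2 + y2 = supp_fn \<beta>"
  shows "- \<beta> \<in> slopesL l n a"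
proof -
  let ?S = "newton_polygon l n a"
  let ?F = "?S \<inter> {z. inner (\<beta>, 1) z = supp_fn \<beta>}"
  have supporting: "inner (\<beta>, 1) z \<ge> supp_fn \<beta>" if "z \<in> ?S" for z
  proof -
    have "supp_fn \<beta> \<le> \<beta> * fst z + 1 * snd z"
      by (rule newton_polygon_halfplane[OF _ _ that]) (auto dest: supp_fn_le)
    then show ?thesis by (simp add: inner_prod_def)
  qed
  have face: "?F face_of ?S"
    by (rule face_of_Int_supporting_hyperplane_ge)
       (auto intro: convex_newton_polygon supporting)
  have in1: "(x1, y1) \<in> ?F" and in2: "(x2, y2) \<in> ?F"
    using P_subset_newton_polygon p1 p2 e1 e2 by (auto simp: inner_prod_def)
  have "aff_dim {(x1, y1), (x2, y2)} = 1" using \<open>x1 < x2\<close> by simp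
  then have "1 \<le> aff_dim ?F"
    by (metis aff_dim_subset empty_subsetI in1 in2 insert_subset)
  moreover have "collinear ?F"
    unfolding collinear_def
  proof (intro exI[of _ "(1::real, - \<beta>)"] ballI)
    fix z w assume "z \<in> ?F" "w \<in> ?F"
    then have "\<beta> * fst z + snd z = \<beta> * fst w + snd w" by (simp add: inner_prod_def)
    then have "z - w = (fst z - fst w) *\<^sub>R (1::real, - \<beta>)"
      by (simp add: prod_eq_iff algebra_simps)
    then show "\<exists>c. z - w = c *\<^sub>R (1, - \<beta>)" by blast
  qed
  then have "aff_dim ?F \<le> 1" by (simp add: collinear_aff_dim)
  moreover have "- \<beta> = (snd (x2, y2) - snd (x1, y1)) / (fst (x2, y2) - fst (x1, y1))"
    using \<open>x1 < x2\<close> e1 e2 by (simp add: field_simps)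
  then have "\<exists>p\<in>?F. \<exists>q\<in>?F. fst p < fst q \<and> - \<beta> = (snd q - snd p) / (fst q - fst p)"
    using \<open>x1 < x2\<close> by (intro bexI[OF _ in1] bexI[OF _ in2]) simp
  ultimately show ?thesis unfolding slopesL_def mem_Collect_eq using face by auto
qed

lemma above_chord_in_newton_polygon:
  assumes pS: "p \<in> newton_polygon l n a" and qS: "q \<in> newton_polygon l n a" and "fst p < fst q"
    and gp: "snd p - \<mu> * fst p = c" and gq: "snd q - \<mu> * fst q = c"
    and "fst p \<le> fst z" "fst z \<le> fst q" "c \<le> snd z - \<mu> * fst z"
  shows "z \<in> newton_polygon l n a"
proof -
  define r where "r = (fst z - fst p) / (fst q - fst p)"
  have r01: "0 \<le> r" "r \<le> 1" unfolding r_def using assms(3,6,7) by (auto simp: divide_le_eq_1)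
  define s0 where "s0 = (1 - r) *\<^sub>R p + r *\<^sub>R q"
  have s0S: "s0 \<in> newton_polygon l n a"
    unfolding s0_def using convexD[OF convex_newton_polygon pS qS] r01 by simp
  have "r * (fst q - fst p) = fst z - fst p" unfolding r_def using assms(3) by simp
  then have fs0: "fst s0 = fst z" unfolding s0_def by (simp add: algebra_simps)
  have "snd s0 - \<mu> * fst s0 = c" unfolding s0_def using gp gq by (simp add: algebra_simps)
  then have "snd z - snd s0 \<ge> 0" using fs0 assms(8) by simp
  moreover have "z = s0 + (0, snd z - snd s0)" using fs0 by (simp add: prod_eq_iff)
  ultimately show ?thesis using newton_polygon_upward_closed[OF s0S] by metis
qed

text \<open>A one-dimensional face through \<open>p\<close> and \<open>q\<close> lies on a supporting line: otherwise a point
  \<open>z\<close> below the line, together with a point above the midpoint of \<open>p q\<close> (which lies in the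
  polygon since it is closed upwards), would have the midpoint in its open segment.\<close>
lemma face_on_supporting_line:
  assumes F: "F face_of newton_polygon l n a" "collinear F"
    and pq: "p \<in> F" "q \<in> F" "fst p < fst q"
    and gp: "snd p - \<mu> * fst p = c" and gq: "snd q - \<mu> * fst q = c"
    and zS: "z \<in> newton_polygon l n a"
  shows "c \<le> snd z - \<mu> * fst z"
proof (rule ccontr)
  let ?S = "newton_polygon l n a"
  define g where "g z = snd z - \<mu> * fst z" for z :: "real \<times> real"
  assume "\<not> ?thesis"
  then have gz: "g z < c" unfolding g_def by simp
  have pS: "p \<in> ?S" and qS: "q \<in> ?S" using pq F(1) face_of_imp_subset by blast+
  define m where "m = (1/2) *\<^sub>R p + (1/2) *\<^sub>R q"
  have mF: "m \<in> F"
    unfolding m_def using convexD[OF face_of_imp_convex[OF F(1)] pq(1,2), of "1/2" "1/2"] by simp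
  have gm: "g m = c" unfolding m_def g_def using gp gq by (simp add: algebra_simps)
  define D where "D = \<bar>fst m - fst z\<bar> + 1"
  have "D > 0" unfolding D_def by simp
  define s where "s = (fst q - fst p) / (2 * D)"
  have spos: "s > 0" unfolding s_def using pq(3) \<open>D > 0\<close> by simp
  define m' where "m' = m + s *\<^sub>R (m - z)"
  have "\<bar>s * (fst m - fst z)\<bar> \<le> s * D"
    unfolding D_def using spos by (simp add: abs_mult)
  also have "\<dots> = (fst q - fst p) / 2" unfolding s_def using \<open>D > 0\<close> by simp
  finally have "s * (fst m - fst z) \<le> (fst q - fst p) / 2"
    "- (s * (fst m - fst z)) \<le> (fst q - fst p) / 2" unfolding abs_le_iff by simp_all
  moreover have "fst m' = (fst p + fst q) / 2 + s * (fst m - fst z)"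
    unfolding m'_def m_def by (simp add: algebra_simps)
  ultimately have fm': "fst p \<le> fst m'" "fst m' \<le> fst q" by (simp_all add: field_simps)
  have "g m' = c + s * (c - g z)" unfolding m'_def using gm by (simp add: g_def algebra_simps)
  then have "g m' > c" using spos gz by simp
  then have m'S: "m' \<in> ?S"
    using above_chord_in_newton_polygon[OF pS qS pq(3) gp gq fm'] unfolding g_def by simp
  have "s *\<^sub>R z + m' = (1 + s) *\<^sub>R m" unfolding m'_def by (simp add: algebra_simps)
  have "1 - 1/(1 + s) = s/(1 + s)" using spos by (simp add: field_simps)
  then have "(1 - 1/(1 + s)) *\<^sub>R z + (1/(1 + s)) *\<^sub>R m' = (1/(1 + s)) *\<^sub>R (s *\<^sub>R z + m')"
    by (simp add: scaleR_add_right)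
  also have "\<dots> = m" unfolding \<open>s *\<^sub>R z + m' = (1 + s) *\<^sub>R m\<close> using spos by simp
  finally have "m = (1 - 1/(1 + s)) *\<^sub>R z + (1/(1 + s)) *\<^sub>R m'" by simp
  moreover have "z \<noteq> m'" using gz \<open>g m' > c\<close> by auto
  moreover have "0 < 1/(1 + s)" "1/(1 + s) < 1" using spos by auto
  ultimately have "m \<in> open_segment z m'" unfolding in_segment by blast
  then have "z \<in> F" using F(1) zS m'S mF unfolding face_of_def by blast
  then have "g z = c" using collinear_affine_eq[OF F(2) pq(1,2) _ _ \<open>z \<in> F\<close>, of \<mu>] pq(3) gp gq
    unfolding g_def by simp
  then show False using gz by simp
qed

lemma supporting_line_in_hull:
  assumes above: "\<And>z. z \<in> newton_polygon l n a \<Longrightarrow> c \<le> snd z - \<mu> * fst z"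
    and r: "r \<in> newton_polygon l n a" "snd r - \<mu> * fst r = c"
  shows "r \<in> convex hull {z\<in>P. snd z - \<mu> * fst z = c}"
proof -
  let ?S = "newton_polygon l n a"
  define g where "g z = snd z - \<mu> * fst z" for z :: "real \<times> real"
  define Q where "Q = {z\<in>P. g z = c}"
  obtain S u where S: "finite S" "S \<subseteq> np_gens" "\<forall>s\<in>S. 0 \<le> u s" "sum u S = 1"
    "(\<Sum>s\<in>S. u s *\<^sub>R s) = r"
    using r(1) unfolding newton_polygon_eq convex_hull_explicit by blast
  have gS: "c \<le> g s" if "s \<in> S" for s
  proof -
    have "s \<in> ?S" using S(2) that unfolding newton_polygon_eq by (blast intro: hull_inc)
    then show ?thesis unfolding g_def by (rule above)
  qed
  have "g r = (\<Sum>s\<in>S. u s * g s)"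
    unfolding S(5)[symmetric] g_def fst_sum snd_sum
    by (simp add: sum_subtractf sum_distrib_left right_diff_distrib mult.left_commute)
  then have "(\<Sum>s\<in>S. u s * (g s - c)) = 0" using r(2) S(4) unfolding g_def
    by (simp add: right_diff_distrib sum_subtractf flip: sum_distrib_right)
  then have zero: "u s * (g s - c) = 0" if "s \<in> S" for s
    using sum_nonneg_eq_0_iff[OF S(1), of "\<lambda>s. u s * (g s - c)"] S(3) gS that by auto
  define S' where "S' = {s\<in>S. u s \<noteq> 0}"
  have "S' \<subseteq> Q"
  proof
    fix s assume "s \<in> S'"
    then have "s \<in> S" "u s \<noteq> 0" unfolding S'_def by auto
    then have s: "s \<in> np_gens" "g s = c" using zero[of s] S(2) by auto
    obtain y0 where y0: "(fst s, y0) \<in> P" "y0 \<le> snd s" using s(1) by (rule np_gensE)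
    have "c \<le> g (fst s, y0)" using above y0(1) P_subset_newton_polygon unfolding g_def by auto
    then have "s = (fst s, y0)" using s(2) y0(2) unfolding g_def by (simp add: prod_eq_iff)
    then show "s \<in> Q" unfolding Q_def using y0(1) s(2) by auto
  qed
  moreover have "S' \<subseteq> S" "finite S'" using S(1) unfolding S'_def by auto
  moreover have "sum u S' = 1" "(\<Sum>s\<in>S'. u s *\<^sub>R s) = r"
    using sum.mono_neutral_left[OF S(1) \<open>S' \<subseteq> S\<close>, of u]
      sum.mono_neutral_left[OF S(1) \<open>S' \<subseteq> S\<close>, of "\<lambda>s. u s *\<^sub>R s"] S(4,5)
    unfolding S'_def by auto
  ultimately have "r \<in> convex hull Q" unfolding convex_hull_explicit using S(3) by blast
  then show ?thesis unfolding Q_def g_def .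
qed

lemma slope_through_points:
  assumes "\<mu> \<in> slopesL l n a"
  shows "\<exists>z1\<in>P. \<exists>z2\<in>P. fst z1 < fst z2 \<and> \<mu> = (snd z2 - snd z1) / (fst z2 - fst z1)"
proof -
  let ?S = "newton_polygon l n a"
  obtain F p q where F: "F face_of ?S" "aff_dim F = 1" and pq: "p \<in> F" "q \<in> F" "fst p < fst q"
    and mu: "\<mu> = (snd q - snd p) / (fst q - fst p)"
    using assms unfolding slopesL_def by auto
  define g where "g z = snd z - \<mu> * fst z" for z :: "real \<times> real"
  define c where "c = g p"
  have gq: "g q = c" unfolding c_def g_def mu using pq(3) by (simp add: field_simps)
  have above: "c \<le> g z" if "z \<in> ?S" for z
    using face_on_supporting_line[OF F(1) _ pq _ _ that] F(2) gq
    unfolding c_def g_def by (simp add: collinear_aff_dim)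
  define Q where "Q = {z\<in>P. g z = c}"
  have hull_Q: "r \<in> convex hull Q" if "r \<in> ?S" "g r = c" for r
    using supporting_line_in_hull[of c \<mu> r] above that unfolding Q_def g_def by blast
  have "\<exists>z1\<in>Q. \<exists>z2\<in>Q. fst z1 < fst z2"
  proof (rule ccontr)
    assume single: "\<not> ?thesis"
    have "p \<in> ?S" "q \<in> ?S" using pq F(1) face_of_imp_subset by blast+
    then have "p \<in> convex hull Q" "q \<in> convex hull Q" using hull_Q c_def gq by auto
    then have "Q \<noteq> {}" by auto
    then obtain z0 where "z0 \<in> Q" by blast
    then have "fst z = fst z0" if "z \<in> Q" for z
      using single that by (meson linorder_neqE_linordered_idom)
    then have "convex hull Q \<subseteq> {z. fst z = fst z0}" by (intro hull_minimal convex_fst_eq) auto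
    then have "fst p = fst z0" "fst q = fst z0"
      using \<open>p \<in> convex hull Q\<close> \<open>q \<in> convex hull Q\<close> by blast+
    then show False using pq(3) by simp
  qed
  then obtain z1 z2 where z: "z1 \<in> Q" "z2 \<in> Q" "fst z1 < fst z2" by blast
  then have "\<mu> = (snd z2 - snd z1) / (fst z2 - fst z1)" unfolding Q_def g_def
    by (simp add: field_simps)
  then show ?thesis using z unfolding Q_def by blast
qed

lemma finite_slopes: "finite (slopesL l n a)"
proof -
  have "slopesL l n a \<subseteq> (\<lambda>(z1, z2). (snd z2 - snd z1) / (fst z2 - fst z1)) ` (P \<times> P)"
    using slope_through_points by fastforce
  then show ?thesis using finite_P finite_subset by blast
qed

text \<open>Moving the parameter from \<open>w\<close> downwards, the rightmost point active at \<open>w\<close> stays active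
  until the next slope \<open>-\<beta>\<close> of the Newton polygon is reached.\<close>
lemma next_breakpoint:
  assumes c: "(xc, e) \<in> P" "supp_fn w = w * xc + e"
    and rightmost: "\<And>x y. (x, y) \<in> P \<Longrightarrow> supp_fn w = w * x + y \<Longrightarrow> x \<le> xc"
    and right: "(x, y) \<in> P" "xc < x"
  obtains \<beta> where "- \<beta> \<in> slopesL l n a" "\<beta> < w" "\<And>x y. (x, y) \<in> P \<Longrightarrow> \<beta> * xc + e \<le> \<beta> * x + y"
proof -
  define R where "R = {z\<in>P. xc < fst z}"
  have "finite R" "R \<noteq> {}" using finite_P right unfolding R_def by auto
  define t where "t z = (e - snd z) / (fst z - xc)" for z :: "real \<times> real"
  define \<beta> where "\<beta> = Max (t ` R)"
  have t_le: "t z \<le> \<beta>" if "z \<in> R" for z unfolding \<beta>_def using \<open>finite R\<close> that by simp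
  have "\<beta> \<in> t ` R" unfolding \<beta>_def using \<open>finite R\<close> \<open>R \<noteq> {}\<close> by (intro Max_in) auto
  then obtain zs where zs: "zs \<in> R" "t zs = \<beta>" by (metis imageE)
  have t_le_w: "t z \<le> w" if "z \<in> R" for z
  proof -
    have "xc < fst z" "w * xc + e \<le> w * fst z + snd z"
      using that c(2) supp_fn_le[of "fst z" "snd z" w] unfolding R_def by auto
    then show ?thesis unfolding t_def by (simp add: divide_le_eq algebra_simps)
  qed
  have below: "\<beta> * xc + e \<le> \<beta> * x' + y'" if "(x', y') \<in> P" for x' y'
  proof (cases "xc < x'")
    case True
    then have "t (x', y') \<le> \<beta>" using t_le that unfolding R_def by simp
    then show ?thesis unfolding t_def using True by (simp add: divide_le_eq algebra_simps)
  next
    case False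
    have "w * xc + e \<le> w * x' + y'" using supp_fn_le[OF that, of w] c(2) by simp
    moreover have "(w - \<beta>) * x' \<le> (w - \<beta>) * xc"
      using False t_le_w[OF zs(1)] zs(2) by (intro mult_left_mono) auto
    ultimately show ?thesis by (simp add: algebra_simps)
  qed
  have zs': "zs \<in> P" "xc < fst zs" "\<beta> * fst zs + snd zs = \<beta> * xc + e"
    using zs unfolding R_def t_def by (auto simp: field_simps)
  have "supp_fn \<beta> = \<beta> * xc + e"
    using below supp_fn_le[OF c(1)] supp_fn_ge_iff[of "\<beta> * xc + e" \<beta>] by (auto intro: antisym)
  then have "- \<beta> \<in> slopesL l n a"
    using slope_of_breakpoint[of xc e "fst zs" "snd zs" \<beta>] c(1) zs' by simp
  moreover have "\<beta> < w"
  proof (rule ccontr)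
    assume "\<not> \<beta> < w"
    then have "\<beta> = w" using t_le_w[OF zs(1)] zs(2) by simp
    then have "fst zs \<le> xc" using rightmost[of "fst zs" "snd zs"] zs' c(2) by simp
    then show False using zs' by simp
  qed
  ultimately show ?thesis using that below by blast
qed

lemma piL_times_power:
  obtains c e :: nat where "c \<le> n" "piL l n a q * real l ^ c = q - real e"
proof -
  obtain x y where xy: "(x, y) \<in> P" "piL l n a q = (q - y) / x" by (rule piL_attained)
  moreover obtain c e where "c \<le> n" "x = real l ^ c" "y = real e" using xy(1) by (rule mem_PE)
  ultimately show ?thesis using that P_bounds(4)[OF xy(1)] by simp
qed

section \<open>The set \<open>\<V>\<close>\<close>

abbreviation "V \<equiv> VsetL l n a"

lemma mem_Vset_iff: "w \<in> V \<longleftrightarrow> (\<exists>k. w \<in> VL l n a k)"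
  unfolding VsetL_def by auto

lemma piL_in_VL_Suc:
  assumes "v \<in> VL l n a k" "(x, y) \<in> P" shows "piL l n a (v * x + y) \<in> VL l n a (Suc k)"
proof -
  have "piL l n a (v * x + y) \<in> piL l n a ` PsiL l n a v"
    unfolding PsiL_eq using assms(2) by force
  then show ?thesis using assms(1) by auto
qed

lemma piL_in_Vset: "v \<in> V \<Longrightarrow> (x, y) \<in> P \<Longrightarrow> piL l n a (v * x + y) \<in> V"
  using piL_in_VL_Suc mem_Vset_iff by blast

lemma VL_SucE:
  assumes "w \<in> VL l n a (Suc k)"
  obtains v x y where "v \<in> VL l n a k" "(x, y) \<in> P" "w = piL l n a (v * x + y)"
  using assms by (auto simp: PsiL_eq)

lemma Vset_ge: assumes "w \<in> V" shows "- Max (slopesL l n a) \<le> w"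
proof -
  obtain k where "w \<in> VL l n a k" using assms mem_Vset_iff by auto
  then show ?thesis
  proof (induction k arbitrary: w)
    case 0
    then show ?case using finite_slopes by auto
  next
    case (Suc k)
    then obtain v x y where "v \<in> VL l n a k" "(x, y) \<in> P" "w = piL l n a (v * x + y)"
      by (elim VL_SucE)
    then have "- Max (slopesL l n a) \<le> v" "v \<le> w" using Suc.IH ge_piL by auto
    then show ?case by simp
  qed
qed

text \<open>Follow the chain leading to \<open>w\<close> back until it first drops to or below \<open>s\<close>.\<close>
lemma Vset_crossing:
  assumes "w \<in> VL l n a k" "s < w"
  shows "(\<exists>v\<in>VL l n a 0. s < v \<and> v \<le> w) \<or>
    (\<exists>u\<in>V. \<exists>x y. (x, y) \<in> P \<and> u \<le> s \<and> s < piL l n a (u * x + y) \<and> piL l n a (u * x + y) \<le> w)"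
  using assms
proof (induction k arbitrary: w)
  case 0
  then show ?case by auto
next
  case (Suc k)
  obtain v x y where v: "v \<in> VL l n a k" "(x, y) \<in> P" "w = piL l n a (v * x + y)"
    using Suc.prems(1) by (rule VL_SucE)
  have "v \<le> w" using v ge_piL by simp
  show ?case
  proof (cases "v \<le> s")
    case True
    then show ?thesis using v Suc.prems mem_Vset_iff by blast
  next
    case False
    then show ?thesis using Suc.IH[OF v(1)] \<open>v \<le> w\<close> by fastforce
  qed
qed

text \<open>Elements of \<open>\<V>\<close> just above \<open>s\<close> are reached in one step \<open>u \<mapsto> \<pi>(u x + y)\<close> from some
  \<open>u \<le> s\<close>; as \<open>supp_fn\<close> is Lipschitz, such \<open>u\<close> lies just above \<open>(supp_fn s - y) / x\<close>.\<close>
lemma right_accumulates_pull_back: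
  assumes "right_accumulates V s" "\<delta> > 0"
  shows "\<exists>(x, y)\<in>P. \<exists>u\<in>V. (supp_fn s - y) / x < u \<and> u < (supp_fn s - y) / x + \<delta> \<and> u \<le> s"
proof -
  define A where "A = {v \<in> VL l n a 0. s < v}"
  have "finite A" unfolding A_def using finite_slopes by simp
  define \<delta>0 where "\<delta>0 = Min (insert 1 ((\<lambda>v. v - s) ` A))"
  have "\<delta>0 > 0" unfolding \<delta>0_def using \<open>finite A\<close> by (auto simp: A_def Min_gr_iff)
  have \<delta>0_le: "\<delta>0 \<le> v - s" if "v \<in> A" for v
    unfolding \<delta>0_def using \<open>finite A\<close> that by (intro Min_le) auto
  have lpos: "real l ^ n > 0" using l_ge_2 by simp
  define \<delta>' where "\<delta>' = min \<delta>0 (\<delta> / (2 * real l ^ n))"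
  have "\<delta>' > 0" unfolding \<delta>'_def using \<open>\<delta>0 > 0\<close> assms(2) lpos by simp
  then obtain w where w: "w \<in> V" "s < w" "w < s + \<delta>'"
    using assms(1) unfolding right_accumulates_def by blast
  obtain k where "w \<in> VL l n a k" using w mem_Vset_iff by auto
  have "\<not> (\<exists>v\<in>VL l n a 0. s < v \<and> v \<le> w)"
  proof
    assume "\<exists>v\<in>VL l n a 0. s < v \<and> v \<le> w"
    then obtain v where "v \<in> A" "v \<le> w" unfolding A_def by blast
    then show False using \<delta>0_le w(3) unfolding \<delta>'_def by fastforce
  qed
  then obtain u x y where u: "u \<in> V" "(x, y) \<in> P" "u \<le> s" "s < piL l n a (u * x + y)"
      "piL l n a (u * x + y) \<le> w"
    using Vset_crossing[OF \<open>w \<in> VL l n a k\<close> w(2)] by blast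
  have x: "1 \<le> x" "x > 0" using P_bounds[OF u(2)] by auto
  have "\<not> u * x + y \<le> supp_fn s" using u(4) piL_le_iff by (metis not_le)
  then have "supp_fn s - y < u * x" by simp
  then have lower: "(supp_fn s - y) / x < u" using x by (simp add: pos_divide_less_eq)
  have "u * x + y \<le> supp_fn w" using u(5) piL_le_iff by simp
  also have "\<dots> \<le> supp_fn (s + \<delta>')" using w(3) by (intro supp_fn_mono) simp
  also have "\<dots> \<le> supp_fn s + \<delta>' * real l ^ n" using \<open>\<delta>' > 0\<close> by (intro supp_fn_Lipschitz) simp
  finally have "u \<le> (supp_fn s - y) / x + \<delta>' * real l ^ n / x"
    using x by (simp add: pos_le_divide_eq add_divide_distrib[symmetric] algebra_simps)
  moreover have "\<delta>' * real l ^ n / x \<le> \<delta>' * real l ^ n"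
    using x \<open>\<delta>' > 0\<close> lpos by (simp add: divide_le_eq mult_le_cancel_left_pos)
  moreover have "\<delta>' * real l ^ n \<le> \<delta> / 2" unfolding \<delta>'_def using lpos
    by (simp add: min_def field_simps)
  ultimately have "u < (supp_fn s - y) / x + \<delta>" using assms(2) by linarith
  then show ?thesis using lower u(1-3) by blast
qed

lemma right_accumulates_descent:
  assumes "right_accumulates V s"
  shows "\<exists>y<s. right_accumulates V y"
proof -
  define t where "t z = (supp_fn s - snd z) / fst z" for z :: "real \<times> real"
  have "\<exists>z\<in>P. \<forall>\<delta>>0. \<exists>u\<in>V. t z < u \<and> u < t z + \<delta> \<and> u \<le> s"
  proof (rule ccontr)
    assume "\<not> ?thesis"
    then obtain \<delta> where \<delta>: "\<And>z. z \<in> P \<Longrightarrow> \<delta> z > 0 \<and> \<not> (\<exists>u\<in>V. t z < u \<and> u < t z + \<delta> z \<and> u \<le> s)"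
      by metis
    have "Min (\<delta> ` P) > 0" using finite_P P_nonempty \<delta> by (simp add: Min_gr_iff)
    then obtain z u where "z \<in> P" "u \<in> V" "t z < u" "u < t z + Min (\<delta> ` P)" "u \<le> s"
      using right_accumulates_pull_back[OF assms] unfolding t_def by fastforce
    moreover have "Min (\<delta> ` P) \<le> \<delta> z" using finite_P \<open>z \<in> P\<close> by simp
    ultimately have "u < t z + \<delta> z" by linarith
    then show False using \<delta> \<open>z \<in> P\<close> \<open>u \<in> V\<close> \<open>t z < u\<close> \<open>u \<le> s\<close> by blast
  qed
  then obtain z where z: "\<forall>\<delta>>0. \<exists>u\<in>V. t z < u \<and> u < t z + \<delta> \<and> u \<le> s" by blast
  then have "right_accumulates V (t z)" unfolding right_accumulates_def by blast
  moreover have "t z < s" using z[rule_format, of 1] by force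
  ultimately show ?thesis by blast
qed

text \<open>\<open>\<V>\<close> is well ordered; in particular the minima in the definition of \<open>\<epsilon>\<close> exist.\<close>
lemma Vset_least_above:
  assumes "\<exists>w\<in>V. \<beta> < w"
  shows "\<exists>m\<in>V. \<beta> < m \<and> (\<forall>w\<in>V. \<beta> < w \<longrightarrow> m \<le> w)"
proof (rule least_above_if_no_right_accumulation[OF no_right_accumulation assms])
  fix s assume acc: "right_accumulates V s"
  show "- Max (slopesL l n a) \<le> s"
  proof (rule ccontr)
    assume "\<not> ?thesis"
    then have "0 < - Max (slopesL l n a) - s" by simp
    then obtain w where "w \<in> V" "w < s + (- Max (slopesL l n a) - s)"
      using acc unfolding right_accumulates_def by blast
    then show False using Vset_ge by fastforce
  qed
qed (rule right_accumulates_descent)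

end

section \<open>The gap \<open>\<tau>\<close> and the potential\<close>

locale newton_operator_denominator = newton_operator +
  fixes d :: nat
  assumes d_ge_1: "d \<ge> 1" and slopes_denominator: "\<forall>\<mu>\<in>slopesL l n a. real d * \<mu> \<in> \<int>"
begin

abbreviation "\<tau> \<equiv> tauL d l n a"

lemma epsL_SomeD:
  assumes "epsL l n a \<beta> = Some e"
  shows "0 < e" "\<And>w. w \<in> V \<Longrightarrow> \<beta> < w \<Longrightarrow> \<beta> + e \<le> w"
proof -
  have "\<exists>w\<in>V. \<beta> < w" using assms unfolding epsL_def by (auto split: if_splits)
  then obtain m where m: "m \<in> V" "\<beta> < m" "\<And>w. w \<in> V \<Longrightarrow> \<beta> < w \<Longrightarrow> m \<le> w"
    using Vset_least_above by blast
  have "(LEAST w. w \<in> V \<and> \<beta> < w) = m" by (rule Least_equality) (use m in auto)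
  then have "e = m - \<beta>" using assms \<open>\<exists>w\<in>V. \<beta> < w\<close> unfolding epsL_def by auto
  then show "0 < e" "\<And>w. w \<in> V \<Longrightarrow> \<beta> < w \<Longrightarrow> \<beta> + e \<le> w" using m by force+
qed

lemma finite_eps_values: "finite {e. \<exists>\<mu>\<in>slopesL l n a. epsL l n a (- \<mu>) = Some e}"
proof -
  have "{e. \<exists>\<mu>\<in>slopesL l n a. epsL l n a (- \<mu>) = Some e}
      \<subseteq> (\<lambda>\<mu>. the (epsL l n a (- \<mu>))) ` slopesL l n a"
    by force
  then show ?thesis using finite_slopes finite_subset by blast
qed

lemma tau_pos: "0 < \<tau>"
  unfolding tauL_def using finite_eps_values d_ge_1 l_ge_2 by (auto simp: Min_gr_iff dest: epsL_SomeD(1))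

lemma tau_le: "\<tau> \<le> 1 / (real d * real l ^ n)"
  unfolding tauL_def using finite_eps_values by (intro Min_le) auto

lemma tau_le_gap:
  assumes "- \<beta> \<in> slopesL l n a" "w \<in> V" "\<beta> < w"
  shows "\<beta> + \<tau> \<le> w"
proof -
  have "\<exists>w\<in>V. \<beta> < w" using assms(2,3) by blast
  then obtain e where e: "epsL l n a \<beta> = Some e" unfolding epsL_def by simp
  then have "\<tau> \<le> e" unfolding tauL_def using finite_eps_values assms(1)
    by (intro Min_le) (auto intro: bexI[of _ "- \<beta>"])
  then show ?thesis using epsL_SomeD(2)[OF e assms(2,3)] by simp
qed

lemma tau_le_of_Ints:
  assumes "real d * real l ^ c * \<Delta> \<in> \<int>" "0 < \<Delta>" "c \<le> n"
  shows "\<tau> \<le> \<Delta>"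
proof -
  have pos: "0 < real d * real l ^ c" using d_ge_1 l_ge_2 by simp
  then have "0 < real d * real l ^ c * \<Delta>" using assms(2) by simp
  moreover have "1 \<le> \<bar>real d * real l ^ c * \<Delta>\<bar>"
    by (rule Ints_nonzero_abs_ge1[OF assms(1)]) (use \<open>0 < real d * real l ^ c * \<Delta>\<close> in linarith)
  ultimately have "1 \<le> real d * real l ^ c * \<Delta>" by simp
  then have "1 / (real d * real l ^ c) \<le> \<Delta>" using pos by (simp add: divide_le_eq mult.commute)
  moreover have "1 / (real d * real l ^ n) \<le> 1 / (real d * real l ^ c)"
    using pos assms(3) l_ge_2 d_ge_1
    by (intro divide_left_mono mult_left_mono power_increasing) (auto simp: zero_less_mult_iff)
  ultimately show ?thesis using tau_le by linarith
qed

lemma Vset_denominator: assumes "v \<in> V" shows "\<exists>K. v * real d * real l ^ K \<in> \<int>"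
proof -
  obtain k where "v \<in> VL l n a k" using assms mem_Vset_iff by auto
  then show ?thesis
  proof (induction k arbitrary: v)
    case 0
    then obtain \<mu> where "\<mu> \<in> slopesL l n a" "v = - \<mu>" by auto
    then have "- (real d * \<mu>) \<in> \<int>" using slopes_denominator by (blast intro: Ints_minus)
    then have "v * real d * real l ^ 0 \<in> \<int>" using \<open>v = - \<mu>\<close> by (simp add: algebra_simps)
    then show ?case by blast
  next
    case (Suc k)
    obtain u x y where u: "u \<in> VL l n a k" "(x, y) \<in> P" "v = piL l n a (u * x + y)"
      using Suc.prems by (rule VL_SucE)
    obtain K where K: "u * real d * real l ^ K \<in> \<int>" using Suc.IH[OF u(1)] by blast
    obtain i j where ij: "x = real l ^ i" "y = real j" using u(2) by (rule mem_PE)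
    obtain c e :: nat where ve: "v * real l ^ c = u * x + y - real e"
      using piL_times_power unfolding u(3) by metis
    have "v * real d * real l ^ (K + c) = (v * real l ^ c) * (real d * real l ^ K)"
      by (simp add: power_add algebra_simps)
    also have "\<dots> = (u * real d * real l ^ K) * real l ^ i + (real j - real e) * real d * real l ^ K"
      unfolding ve ij by (simp add: algebra_simps)
    also have "\<dots> \<in> \<int>" using K by (simp add: Ints_mult Ints_add Ints_diff)
    finally show ?case by blast
  qed
qed

lemma hL_piL_le:
  assumes "v \<in> V" "(real l ^ i, real j) \<in> P"
  shows "hL d l v \<le> hL d l (piL l n a (v * real l ^ i + real j)) + i"
proof (cases "i < hL d l v")
  case True
  obtain K where K: "v * real d * real l ^ K \<in> \<int>" using Vset_denominator[OF assms(1)] by blast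
  obtain c e :: nat where
    eq: "piL l n a (v * real l ^ i + real j) * real l ^ c = v * real l ^ i + (real j - real e)"
    using piL_times_power by (metis add_diff_eq)
  show ?thesis using hL_quotient_ge[OF K eq _ True] by simp
qed simp

text \<open>If the parameter passes the slope \<open>-\<beta>\<close> next to the rightmost active point of \<open>w\<close>,
  either \<open>v < \<beta>\<close> and the gap after \<open>\<beta>\<close> is crossed, or \<open>\<beta> < v\<close> and the gap after \<open>\<beta>\<close> bounds
  \<open>v - \<beta> \<le> w - v\<close>, or \<open>v = \<beta>\<close> and \<open>w - v\<close> has denominator dividing \<open>d l^n\<close>.\<close>
lemma tau_le_step_beyond_rightmost:
  assumes v: "v \<in> V" and xy: "(x, y) \<in> P" and w: "w = piL l n a (v * x + y)" and "v < w"
    and c: "(xc, e) \<in> P" "supp_fn w = w * xc + e"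
    and rightmost: "\<And>x y. (x, y) \<in> P \<Longrightarrow> supp_fn w = w * x + y \<Longrightarrow> x \<le> xc"
    and "real l * xc \<le> x"
  shows "\<tau> \<le> w - v"
proof -
  have xc: "0 < xc" using P_bounds[OF c(1)] by simp
  have two_xc: "2 * xc \<le> x" using \<open>real l * xc \<le> x\<close> l_ge_2 xc
    by (meson mult_right_mono numeral_le_real_of_nat_iff order_trans less_imp_le)
  then have "xc < x" using xc by simp
  obtain \<beta> where \<beta>: "- \<beta> \<in> slopesL l n a" "\<beta> < w"
    and below: "\<And>x y. (x, y) \<in> P \<Longrightarrow> \<beta> * xc + e \<le> \<beta> * x + y"
    using next_breakpoint[OF c _ xy \<open>xc < x\<close>] rightmost by blast
  have weq: "w * xc + e = v * x + y" using c(2) supp_fn_piL w by simp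
  have "w \<in> V" unfolding w using piL_in_Vset[OF v xy] .
  consider "v < \<beta>" | "\<beta> < v" | "v = \<beta>" by linarith
  then show ?thesis
  proof cases
    case 1
    then show ?thesis using tau_le_gap[OF \<beta>(1) \<open>w \<in> V\<close> \<beta>(2)] by simp
  next
    case 2
    have "(v - \<beta>) * xc \<le> (v - \<beta>) * (x - xc)"
      using 2 two_xc by (intro mult_left_mono) auto
    also have "\<dots> \<le> xc * (w - v)" using below[OF xy] weq by (simp add: algebra_simps)
    finally have "v - \<beta> \<le> w - v" using xc by (simp add: mult.commute)
    then show ?thesis using tau_le_gap[OF \<beta>(1) v 2] by simp
  next
    case 3
    obtain i j where ij: "x = real l ^ i" "y = real j" using xy by (rule mem_PE)
    obtain c' e' where ce: "c' \<le> n" "xc = real l ^ c'" "e = real e'" using c(1) by (rule mem_PE)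
    have "- (real d * (- \<beta>)) \<in> \<int>" using slopes_denominator \<beta>(1) by (blast intro: Ints_minus)
    moreover have "real l ^ i - real l ^ c' \<in> \<int>" by (intro Ints_diff) (simp_all add: Ints_power)
    ultimately have "real d * \<beta> * (real l ^ i - real l ^ c') + real d * (real j - real e') \<in> \<int>"
      by (simp add: Ints_add Ints_mult)
    moreover have "real d * \<beta> * (real l ^ i - real l ^ c') + real d * (real j - real e')
        = real d * real l ^ c' * (w - v)"
      using arg_cong[OF weq, of "\<lambda>t. real d * t"] 3 unfolding ij ce by (simp add: algebra_simps)
    ultimately show ?thesis using tau_le_of_Ints[of c' "w - v"] \<open>v < w\<close> ce(1) by simp
  qed
qed

lemma hL_less_of_small_step:
  assumes v: "v \<in> V" and xy: "(real l ^ i, real j) \<in> P"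
    and w: "w = piL l n a (v * real l ^ i + real j)" and "v < w" and small: "w - v < \<tau>"
  shows "hL d l v < hL d l w"
proof -
  obtain xc e where c: "(xc, e) \<in> P" "supp_fn w = w * xc + e"
    and rightmost: "\<And>x y. (x, y) \<in> P \<Longrightarrow> supp_fn w = w * x + y \<Longrightarrow> x \<le> xc"
    using rightmost_active_point[of w] by metis
  obtain c' e' where ce: "c' \<le> n" "xc = real l ^ c'" "e = real e'" using c(1) by (rule mem_PE)
  have weq: "w * real l ^ c' = v * real l ^ i + (real j - real e')"
    using c(2) supp_fn_piL w ce by simp
  have not_Ints: "\<not> real d * real l ^ c' * (w - v) \<in> \<int>"
    using tau_le_of_Ints[OF _ _ ce(1)] \<open>v < w\<close> small by fastforce
  consider "i = c'" | "i < c'" | "c' < i" by linarith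
  then show ?thesis
  proof cases
    case 1
    then have "real d * real l ^ c' * (w - v) = real d * (real j - real e')"
      using arg_cong[OF weq, of "\<lambda>t. real d * t"] by (simp add: algebra_simps)
    also have "\<dots> \<in> \<int>" by simp
    finally show ?thesis using not_Ints by blast
  next
    case 2
    obtain K where "v * real d * real l ^ K \<in> \<int>" using Vset_denominator[OF v] by blast
    then show ?thesis using hL_less_of_shift[OF _ weq _ 2 not_Ints] by simp
  next
    case 3
    have "real l * xc = real l ^ Suc c'" using ce(2) by simp
    also have "\<dots> \<le> real l ^ i" using 3 l_ge_2 by (intro power_increasing) auto
    finally have "real l * xc \<le> real l ^ i" .
    with v xy w \<open>v < w\<close> c rightmost have "\<tau> \<le> w - v" by (rule tau_le_step_beyond_rightmost)
    then show ?thesis using small by simp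
  qed
qed

definition potential :: "real \<Rightarrow> real" where
  "potential u = real (n + 1) * u / \<tau> + real (hL d l u)"

lemma potential_step:
  assumes "v \<in> V" "w \<in> piL l n a ` PsiL l n a v" "v < w"
  shows "potential v + 1 \<le> potential w"
proof -
  obtain x y where "(x, y) \<in> P" "w = piL l n a (v * x + y)"
    using assms(2) unfolding PsiL_eq by auto
  then obtain i j where ij: "i \<le> n" "(real l ^ i, real j) \<in> P"
    "w = piL l n a (v * real l ^ i + real j)"
    by (metis mem_PE)
  have "potential w - potential v = real (n + 1) * (w - v) / \<tau> + (real (hL d l w) - real (hL d l v))"
    unfolding potential_def by (simp add: diff_divide_distrib right_diff_distrib)
  moreover consider "\<tau> \<le> w - v" | "w - v < \<tau>" by linarith
  then have "1 \<le> real (n + 1) * (w - v) / \<tau> + (real (hL d l w) - real (hL d l v))"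
  proof cases
    case 1
    then have "real (n + 1) \<le> real (n + 1) * (w - v) / \<tau>"
      using tau_pos by (simp add: le_divide_eq mult_left_mono)
    moreover have "hL d l v \<le> hL d l w + n" using hL_piL_le[OF assms(1) ij(2)] ij(1,3) by simp
    ultimately show ?thesis by linarith
  next
    case 2
    then have "hL d l v < hL d l w" using hL_less_of_small_step[OF assms(1) ij(2,3) assms(3)] by simp
    moreover have "0 \<le> real (n + 1) * (w - v) / \<tau>" using assms(3) tau_pos by simp
    ultimately show ?thesis by linarith
  qed
  ultimately show ?thesis by simp
qed

end

theorem mainTheorem10:
  fixes a :: "nat \<Rightarrow> 'a::field poly" and l n d M :: nat and v :: "nat \<Rightarrow> real"
  assumes "l \<ge> 2" and "n \<ge> 1" and "a 0 \<noteq> 0" and "a n \<noteq> 0"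
    and "d \<ge> 1" and "\<forall>\<mu>\<in>slopesL l n a. real d * \<mu> \<in> \<int>"
    and "\<forall>i\<le>M. v i \<in> VsetL l n a"
    and "\<forall>i<M. v i < v (Suc i)"
    and "\<forall>i<M. v (Suc i) \<in> piL l n a ` PsiL l n a (v i)"
  shows "real M \<le> real (n + 1) * (v M + Max (slopesL l n a)) / tauL d l n a + real (hL d l (v M))"
proof -
  interpret newton_operator_denominator l n a d
    using assms(1,3,5,6) by unfold_locales auto
  have telescope: "potential (v 0) + real k \<le> potential (v k)" if "k \<le> M" for k
    using that
  proof (induction k)
    case (Suc k)
    then have "potential (v k) + 1 \<le> potential (v (Suc k))"
      using assms(7-9) by (intro potential_step) auto
    with Suc show ?case by simp
  qed simp
  have "- Max (slopesL l n a) \<le> v 0" using Vset_ge assms(7) by simp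
  then have "real (n + 1) * - Max (slopesL l n a) / \<tau> \<le> real (n + 1) * v 0 / \<tau>"
    using tau_pos by (intro divide_right_mono mult_left_mono) auto
  with telescope[of M] show ?thesis
    unfolding potential_def by (simp add: distrib_left add_divide_distrib)
qed

end
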